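(* Let $G$ be a transitive permutation group on a finite set $\Omega$ and let $k$ be an integer with $k>1$. Then $G$ is imprimitive with a block of imprimitivity of size at least $k$ if and only if there exists a map $f:\Omega\to\Omega$ with kernel type $(k,1,1,\ldots,1)$ such that $G$ does not synchronize $f$.
   Context: For a permutation group $G$ on $\Omega$ and a map $f:\Omega\to\Omega$ which is not a permutation, $G$ synchronizes $f$ if the semigroup $\langle G,f\rangle$ generated by $G$ and $f$ contains a constant map. The kernel of $f$ is the partition of $\Omega$ into the nonempty inverse images $\{x f^{-1}\}$ of points $x$ in the image of $f$; the kernel type of $f$ is the partition of $n=|\Omega|$ given by the sizes of the parts of the kernel. Thus kernel type $(k,1,\ldots,1)$ means exactly one kernel class has size $k$ and all others are singletons. A block of imprimitivity is a block of a nontrivial $G$-invariant partition of $\Omega$ (one which is neither the partition into singletons nor the partition with one part). *)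

theory Defs
  imports "HOL-Algebra.Bij" "HOL-Library.Disjoint_Sets" "HOL-Library.FuncSet"
begin

inductive_set gen_semigroup :: "'a set \<Rightarrow> ('a \<Rightarrow> 'a) set \<Rightarrow> ('a \<Rightarrow> 'a) \<Rightarrow> ('a \<Rightarrow> 'a) set"
  for \<Omega> G f where
  gen_perm: "g \<in> G \<Longrightarrow> g \<in> gen_semigroup \<Omega> G f"
| gen_map: "f \<in> gen_semigroup \<Omega> G f"
| gen_comp: "s \<in> gen_semigroup \<Omega> G f \<Longrightarrow> t \<in> gen_semigroup \<Omega> G f
     \<Longrightarrow> compose \<Omega> t s \<in> gen_semigroup \<Omega> G f"

definition synchronizes :: "'a set \<Rightarrow> ('a \<Rightarrow> 'a) set \<Rightarrow> ('a \<Rightarrow> 'a) \<Rightarrow> bool" where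
  "synchronizes \<Omega> G f \<longleftrightarrow>
     (\<exists>h \<in> gen_semigroup \<Omega> G f. \<exists>c \<in> \<Omega>. \<forall>x \<in> \<Omega>. h x = c)"

definition kernel :: "'a set \<Rightarrow> ('a \<Rightarrow> 'a) \<Rightarrow> 'a set set" where
  "kernel \<Omega> f = {{x \<in> \<Omega>. f x = y} | y. y \<in> f ` \<Omega>}"

definition kernel_type_k1 :: "'a set \<Rightarrow> ('a \<Rightarrow> 'a) \<Rightarrow> nat \<Rightarrow> bool" where
  "kernel_type_k1 \<Omega> f k \<longleftrightarrow>
     (\<exists>B \<in> kernel \<Omega> f. card B = k \<and> (\<forall>C \<in> kernel \<Omega> f. C \<noteq> B \<longrightarrow> card C = 1))"

definition transitive_on :: "'a set \<Rightarrow> ('a \<Rightarrow> 'a) set \<Rightarrow> bool" where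
  "transitive_on \<Omega> G \<longleftrightarrow> (\<forall>x \<in> \<Omega>. \<forall>y \<in> \<Omega>. \<exists>g \<in> G. g x = y)"

definition G_invariant_partition :: "'a set \<Rightarrow> ('a \<Rightarrow> 'a) set \<Rightarrow> 'a set set \<Rightarrow> bool" where
  "G_invariant_partition \<Omega> G P \<longleftrightarrow>
     partition_on \<Omega> P \<and> (\<forall>g \<in> G. \<forall>B \<in> P. g ` B \<in> P)"

definition nontrivial_partition :: "'a set \<Rightarrow> 'a set set \<Rightarrow> bool" where
  "nontrivial_partition \<Omega> P \<longleftrightarrow> P \<noteq> {{x} | x. x \<in> \<Omega>} \<and> P \<noteq> {\<Omega>}"

definition imprimitive_with_block_ge :: "'a set \<Rightarrow> ('a \<Rightarrow> 'a) set \<Rightarrow> nat \<Rightarrow> bool" where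
  "imprimitive_with_block_ge \<Omega> G k \<longleftrightarrow>
     (\<exists>P. G_invariant_partition \<Omega> G P \<and> nontrivial_partition \<Omega> P \<and>
          (\<exists>B \<in> P. card B \<ge> k))"

end

theory Submission imports Defs begin

text \<open>
If \<open>B\<close> is a block of size at least \<open>k\<close>, the map collapsing \<open>k\<close> points of \<open>B\<close> to one of them
fixes every block setwise, so every element of \<open>\<langle>G, f\<rangle>\<close> maps some block into each block;
with at least two blocks no such map is constant.

Conversely, call \<open>x, y\<close> collapsible if some element of \<open>\<langle>G, f\<rangle>\<close> identifies them, and let \<open>N(x)\<close>
be the set of points not collapsible with \<open>x\<close>. By transitivity all \<open>N(x)\<close> have the same size.
For \<open>a, b\<close> in the large kernel class of \<open>f\<close>, the map \<open>f\<close> is injective on \<open>N(a) \<union> N(b)\<close> and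
sends it into \<open>N(f a)\<close>, whence \<open>N(a) = N(b)\<close>. The relation \<open>N(x) = N(y)\<close> is a \<open>G\<close>-congruence
whose class of \<open>a\<close> has at least \<open>k\<close> points, and which is not universal unless \<open>G\<close>
synchronizes \<open>f\<close>.
\<close>

lemma subgroup_BijGroup_bij_betw:
  assumes "subgroup G (BijGroup \<Omega>)" and "g \<in> G"
  shows "bij_betw g \<Omega> \<Omega>"
  using subgroup.subset[OF assms(1)] assms(2) by (auto simp: BijGroup_def Bij_def)

lemma subgroup_BijGroup_inverse:
  assumes sg: "subgroup G (BijGroup \<Omega>)" and g: "g \<in> G"
  obtains h where "h \<in> G" and "\<And>x. x \<in> \<Omega> \<Longrightarrow> h (g x) = x" and "\<And>x. x \<in> \<Omega> \<Longrightarrow> g (h x) = x"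
proof
  have "g \<in> Bij \<Omega>"
    using subgroup.subset[OF sg] g by (auto simp: BijGroup_def)
  then have inv: "m_inv (BijGroup \<Omega>) g = (\<lambda>x\<in>\<Omega>. inv_into \<Omega> g x)"
    by (rule inv_BijGroup)
  show "m_inv (BijGroup \<Omega>) g \<in> G"
    using subgroup.m_inv_closed[OF sg g] .
  have bij: "bij_betw g \<Omega> \<Omega>"
    using subgroup_BijGroup_bij_betw[OF sg g] .
  fix x assume x: "x \<in> \<Omega>"
  show "m_inv (BijGroup \<Omega>) g (g x) = x"
    using inv bij x by (auto simp: bij_betw_def inv_into_f_f)
  show "g (m_inv (BijGroup \<Omega>) g x) = x"
    using inv bij x by (simp add: bij_betw_inv_into_right)
qed

lemma gen_semigroup_funcset:
  assumes "subgroup G (BijGroup \<Omega>)" and "f \<in> \<Omega> \<rightarrow> \<Omega>" and "h \<in> gen_semigroup \<Omega> G f"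
  shows "h \<in> \<Omega> \<rightarrow> \<Omega>"
  using assms(3)
proof (induction rule: gen_semigroup.induct)
  case (gen_perm g)
  then show ?case
    using subgroup_BijGroup_bij_betw[OF assms(1)] bij_betw_imp_funcset by blast
qed (use assms(2) in \<open>auto simp: compose_def\<close>)

subsection \<open>Maps preserving a block system\<close>

definition covers_blocks :: "'a set set \<Rightarrow> ('a \<Rightarrow> 'a) \<Rightarrow> bool" where
  "covers_blocks P h \<longleftrightarrow> (\<forall>D\<in>P. \<exists>C\<in>P. h ` C \<subseteq> D)"

lemma covers_blocks_compose:
  assumes "partition_on \<Omega> P" and "covers_blocks P s" and "covers_blocks P t"
  shows "covers_blocks P (compose \<Omega> t s)"
  unfolding covers_blocks_def
proof
  fix D assume "D \<in> P"
  then obtain C' where C': "C' \<in> P" "t ` C' \<subseteq> D"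
    using assms(3) by (auto simp: covers_blocks_def)
  then obtain C where C: "C \<in> P" "s ` C \<subseteq> C'"
    using assms(2) by (auto simp: covers_blocks_def)
  have "C \<subseteq> \<Omega>"
    using partition_onD1[OF assms(1)] C(1) by blast
  then have "compose \<Omega> t s ` C \<subseteq> D"
    using C C' by (auto simp: compose_def)
  with C(1) show "\<exists>C\<in>P. compose \<Omega> t s ` C \<subseteq> D" by blast
qed

lemma gen_semigroup_covers_blocks:
  assumes sg: "subgroup G (BijGroup \<Omega>)" and inv: "G_invariant_partition \<Omega> G P"
    and f: "\<And>C. C \<in> P \<Longrightarrow> f ` C \<subseteq> C" and h: "h \<in> gen_semigroup \<Omega> G f"
  shows "covers_blocks P h"
  using h
proof (induction rule: gen_semigroup.induct)
  case (gen_perm g)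
  obtain g' where g': "g' \<in> G" "\<And>x. x \<in> \<Omega> \<Longrightarrow> g (g' x) = x"
    using subgroup_BijGroup_inverse[OF sg gen_perm] by metis
  show ?case
    unfolding covers_blocks_def
  proof
    fix D assume D: "D \<in> P"
    then have "D \<subseteq> \<Omega>"
      using inv partition_onD1 by (fastforce simp: G_invariant_partition_def)
    then have "g ` g' ` D = (\<lambda>x. x) ` D"
      unfolding image_image by (intro image_cong) (auto simp: g'(2))
    moreover have "g' ` D \<in> P"
      using inv g'(1) D by (simp add: G_invariant_partition_def)
    ultimately show "\<exists>C\<in>P. g ` C \<subseteq> D" by auto
  qed
next
  case gen_map
  then show ?case
    using f by (auto simp: covers_blocks_def)
next
  case (gen_comp s t)
  then show ?case
    using covers_blocks_compose inv by (auto simp: G_invariant_partition_def)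
qed

lemma covers_blocks_not_constant:
  assumes "partition_on \<Omega> P" and "C \<in> P" and "D \<in> P" and "C \<noteq> D"
    and "covers_blocks P h"
  shows "\<not> (\<forall>x\<in>\<Omega>. h x = c)"
proof
  assume const: "\<forall>x\<in>\<Omega>. h x = c"
  have "c \<in> E" if "E \<in> P" for E
  proof -
    obtain E' where E': "E' \<in> P" "h ` E' \<subseteq> E"
      using assms(5) \<open>E \<in> P\<close> by (auto simp: covers_blocks_def)
    obtain x where x: "x \<in> E'"
      using partition_onD3[OF assms(1)] E'(1) by (metis all_not_in_conv)
    then have "x \<in> \<Omega>"
      using partition_onD1[OF assms(1)] E'(1) by blast
    then have "h x = c"
      using const by simp
    with x E'(2) show ?thesis
      by (metis image_subset_iff)
  qed
  then have "c \<in> C \<inter> D"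
    using assms(2,3) by blast
  then show False
    using disjointD[OF partition_onD2[OF assms(1)] assms(2-4)] by simp
qed

subsection \<open>Collapsing part of a block\<close>

definition collapse_map :: "'a set \<Rightarrow> 'a set \<Rightarrow> 'a \<Rightarrow> 'a \<Rightarrow> 'a" where
  "collapse_map \<Omega> S s = (\<lambda>x\<in>\<Omega>. if x \<in> S then s else x)"

lemma collapse_map_PiE:
  assumes "S \<subseteq> \<Omega>" and "s \<in> S"
  shows "collapse_map \<Omega> S s \<in> \<Omega> \<rightarrow>\<^sub>E \<Omega>"
  using assms by (auto simp: collapse_map_def)

lemma kernel_type_collapse_map:
  assumes S: "S \<subseteq> \<Omega>" and s: "s \<in> S"
  shows "kernel_type_k1 \<Omega> (collapse_map \<Omega> S s) (card S)"
proof -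
  let ?f = "collapse_map \<Omega> S s"
  have fibre_s: "{x \<in> \<Omega>. ?f x = s} = S"
    using S s by (auto simp: collapse_map_def)
  have "?f s = s"
    using S s by (auto simp: collapse_map_def)
  then have "s \<in> ?f ` \<Omega>"
    using S s by (metis image_eqI subsetD)
  with fibre_s have S_kernel: "S \<in> kernel \<Omega> ?f"
    unfolding kernel_def by blast
  have "card C = 1" if C: "C \<in> kernel \<Omega> ?f" "C \<noteq> S" for C
  proof -
    obtain x where x: "x \<in> \<Omega>" and C_eq: "C = {z \<in> \<Omega>. ?f z = ?f x}"
      using C(1) by (auto simp: kernel_def)
    have "x \<notin> S"
    proof
      assume "x \<in> S"
      then have "?f x = s"
        using x by (simp add: collapse_map_def)
      then show False
        using C(2) C_eq fibre_s by simp
    qed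
    with x C_eq have "C = {x}"
      using s by (auto simp: collapse_map_def)
    then show ?thesis by simp
  qed
  with S_kernel show ?thesis
    unfolding kernel_type_k1_def by blast
qed

lemma collapse_map_maps_blocks:
  assumes P: "partition_on \<Omega> P" and B: "B \<in> P" and S: "S \<subseteq> B" and s: "s \<in> S"
    and C: "C \<in> P"
  shows "collapse_map \<Omega> S s ` C \<subseteq> C"
proof
  fix y assume "y \<in> collapse_map \<Omega> S s ` C"
  then obtain x where x: "x \<in> C" "y = collapse_map \<Omega> S s x" by blast
  have "x \<in> \<Omega>"
    using partition_onD1[OF P] C x(1) by blast
  show "y \<in> C"
  proof (cases "x \<in> S")
    case True
    then have "x \<in> C \<inter> B"
      using S x(1) by blast
    then have "C = B"
      using disjointD[OF partition_onD2[OF P] C B] by blast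
    then show ?thesis
      using x \<open>x \<in> \<Omega>\<close> True s S by (auto simp: collapse_map_def)
  qed (use x \<open>x \<in> \<Omega>\<close> in \<open>auto simp: collapse_map_def\<close>)
qed

lemma imprimitive_imp_non_synchronized_map:
  assumes sg: "subgroup G (BijGroup \<Omega>)" and imp: "imprimitive_with_block_ge \<Omega> G k"
    and k: "k > 1"
  shows "\<exists>f \<in> \<Omega> \<rightarrow>\<^sub>E \<Omega>. kernel_type_k1 \<Omega> f k \<and> \<not> synchronizes \<Omega> G f"
proof -
  obtain P B where inv: "G_invariant_partition \<Omega> G P" and P: "partition_on \<Omega> P"
    and not_one: "P \<noteq> {\<Omega>}" and B: "B \<in> P" "card B \<ge> k"
    using imp by (auto simp: imprimitive_with_block_ge_def G_invariant_partition_def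
        nontrivial_partition_def)
  obtain S where S: "S \<subseteq> B" "card S = k"
    using obtain_subset_with_card_n[OF B(2)] by blast
  with k obtain s where s: "s \<in> S"
    by (metis card.empty ex_in_conv not_less_zero)
  have "S \<subseteq> \<Omega>"
    using partition_onD1[OF P] B(1) S(1) by blast
  define f where "f = collapse_map \<Omega> S s"
  have "P \<noteq> {B}"
    using not_one partition_onD1[OF P] by auto
  then obtain D where D: "D \<in> P" "D \<noteq> B"
    using B(1) by blast
  have "covers_blocks P h" if "h \<in> gen_semigroup \<Omega> G f" for h
    using gen_semigroup_covers_blocks[OF sg inv _ that] collapse_map_maps_blocks[OF P B(1) S(1) s]
    by (simp add: f_def)
  then have "\<not> synchronizes \<Omega> G f"
    using covers_blocks_not_constant[OF P B(1) D(1) D(2)[symmetric]]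
    by (auto simp: synchronizes_def)
  moreover have "f \<in> \<Omega> \<rightarrow>\<^sub>E \<Omega>" "kernel_type_k1 \<Omega> f k"
    using collapse_map_PiE[OF \<open>S \<subseteq> \<Omega>\<close> s] kernel_type_collapse_map[OF \<open>S \<subseteq> \<Omega>\<close> s] S(2)
    by (simp_all add: f_def)
  ultimately show ?thesis by blast
qed

subsection \<open>Block systems from \<open>G\<close>-congruences\<close>

lemma G_invariant_partition_quotient:
  assumes sg: "subgroup G (BijGroup \<Omega>)" and eq: "equiv \<Omega> r"
    and compat: "\<And>g x y. g \<in> G \<Longrightarrow> x \<in> \<Omega> \<Longrightarrow> y \<in> \<Omega> \<Longrightarrow> (g x, g y) \<in> r \<longleftrightarrow> (x, y) \<in> r"
  shows "G_invariant_partition \<Omega> G (\<Omega> // r)"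
  unfolding G_invariant_partition_def
proof (intro conjI ballI)
  show "partition_on \<Omega> (\<Omega> // r)"
    using eq by (rule partition_on_quotient)
  fix g C assume g: "g \<in> G" and "C \<in> \<Omega> // r"
  then obtain x where x: "x \<in> \<Omega>" and C: "C = r `` {x}"
    by (auto simp: quotient_def)
  have bij: "bij_betw g \<Omega> \<Omega>"
    using subgroup_BijGroup_bij_betw[OF sg g] .
  have r_sub: "r `` {z} \<subseteq> \<Omega>" for z
    using eq by (auto simp: equiv_def refl_on_def)
  have "g ` r `` {x} = r `` {g x}"
  proof
    show "g ` r `` {x} \<subseteq> r `` {g x}"
      using compat[OF g x] r_sub by auto
    show "r `` {g x} \<subseteq> g ` r `` {x}"
    proof
      fix z assume z: "z \<in> r `` {g x}"
      then obtain w where "w \<in> \<Omega>" "z = g w"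
        using bij r_sub by (metis bij_betw_iff_bijections subsetD)
      with z show "z \<in> g ` r `` {x}"
        using compat[OF g x] by auto
    qed
  qed
  moreover have "g x \<in> \<Omega>"
    using bij x bij_betwE by blast
  ultimately show "g ` C \<in> \<Omega> // r"
    using C by (auto intro: quotientI)
qed

lemma imprimitive_if_G_congruence:
  assumes sg: "subgroup G (BijGroup \<Omega>)" and eq: "equiv \<Omega> r"
    and compat: "\<And>g x y. g \<in> G \<Longrightarrow> x \<in> \<Omega> \<Longrightarrow> y \<in> \<Omega> \<Longrightarrow> (g x, g y) \<in> r \<longleftrightarrow> (x, y) \<in> r"
    and a: "a \<in> \<Omega>" and k: "k > 1" and large: "card (r `` {a}) \<ge> k"
    and x: "x \<in> \<Omega>" and y: "y \<in> \<Omega>" and xy: "(x, y) \<notin> r"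
  shows "imprimitive_with_block_ge \<Omega> G k"
proof -
  have a_class: "r `` {a} \<in> \<Omega> // r"
    using a by (rule quotientI)
  have "\<Omega> // r \<noteq> {{z} | z. z \<in> \<Omega>}"
  proof
    assume "\<Omega> // r = {{z} | z. z \<in> \<Omega>}"
    with a_class obtain z where "r `` {a} = {z}"
      by auto
    with large k show False
      by simp
  qed
  moreover have "\<Omega> // r \<noteq> {\<Omega>}"
  proof
    assume "\<Omega> // r = {\<Omega>}"
    moreover have "r `` {x} \<in> \<Omega> // r"
      using x by (rule quotientI)
    ultimately have "y \<in> r `` {x}"
      using y by simp
    with xy show False
      by simp
  qed
  ultimately have "nontrivial_partition \<Omega> (\<Omega> // r)"
    unfolding nontrivial_partition_def ..
  with G_invariant_partition_quotient[OF sg eq compat] a_class large show ?thesis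
    unfolding imprimitive_with_block_ge_def by blast
qed

subsection \<open>The non-collapsibility graph\<close>

definition collapsible :: "'a set \<Rightarrow> ('a \<Rightarrow> 'a) set \<Rightarrow> ('a \<Rightarrow> 'a) \<Rightarrow> 'a \<Rightarrow> 'a \<Rightarrow> bool" where
  "collapsible \<Omega> G f x y \<longleftrightarrow> (\<exists>m \<in> gen_semigroup \<Omega> G f. m x = m y)"

definition separated :: "'a set \<Rightarrow> ('a \<Rightarrow> 'a) set \<Rightarrow> ('a \<Rightarrow> 'a) \<Rightarrow> 'a \<Rightarrow> 'a set" where
  "separated \<Omega> G f x = {z \<in> \<Omega>. \<not> collapsible \<Omega> G f x z}"

lemma collapsible_refl: "collapsible \<Omega> G f x x"
  using gen_semigroup.gen_map by (auto simp: collapsible_def)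

lemma collapsible_image:
  assumes s: "s \<in> gen_semigroup \<Omega> G f" and "x \<in> \<Omega>" and "y \<in> \<Omega>"
    and "collapsible \<Omega> G f (s x) (s y)"
  shows "collapsible \<Omega> G f x y"
proof -
  obtain m where m: "m \<in> gen_semigroup \<Omega> G f" "m (s x) = m (s y)"
    using assms(4) by (auto simp: collapsible_def)
  have "compose \<Omega> m s \<in> gen_semigroup \<Omega> G f"
    using s m(1) by (rule gen_semigroup.gen_comp)
  moreover have "compose \<Omega> m s x = compose \<Omega> m s y"
    using m(2) assms(2,3) by (simp add: compose_def)
  ultimately show ?thesis
    by (auto simp: collapsible_def)
qed

lemma collapsible_perm_iff:
  assumes sg: "subgroup G (BijGroup \<Omega>)" and g: "g \<in> G" and x: "x \<in> \<Omega>" and y: "y \<in> \<Omega>"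
  shows "collapsible \<Omega> G f (g x) (g y) \<longleftrightarrow> collapsible \<Omega> G f x y"
proof
  show "collapsible \<Omega> G f (g x) (g y) \<Longrightarrow> collapsible \<Omega> G f x y"
    using collapsible_image[OF gen_semigroup.gen_perm[OF g] x y] .
next
  assume xy: "collapsible \<Omega> G f x y"
  obtain h where h: "h \<in> G" "\<And>z. z \<in> \<Omega> \<Longrightarrow> h (g z) = z"
    using subgroup_BijGroup_inverse[OF sg g] by metis
  have "g x \<in> \<Omega>" "g y \<in> \<Omega>"
    using subgroup_BijGroup_bij_betw[OF sg g] x y bij_betwE by blast+
  with xy show "collapsible \<Omega> G f (g x) (g y)"
    using collapsible_image[OF gen_semigroup.gen_perm[OF h(1)]] h(2) x y by metis
qed

lemma separated_perm_image:
  assumes sg: "subgroup G (BijGroup \<Omega>)" and g: "g \<in> G" and x: "x \<in> \<Omega>"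
  shows "separated \<Omega> G f (g x) = g ` separated \<Omega> G f x"
proof -
  have bij: "bij_betw g \<Omega> \<Omega>"
    using subgroup_BijGroup_bij_betw[OF sg g] .
  have "separated \<Omega> G f (g x) = g ` {z \<in> \<Omega>. \<not> collapsible \<Omega> G f (g x) (g z)}"
    using bij by (auto simp: separated_def bij_betw_def)
  also have "{z \<in> \<Omega>. \<not> collapsible \<Omega> G f (g x) (g z)} = separated \<Omega> G f x"
    using collapsible_perm_iff[OF sg g x] by (auto simp: separated_def)
  finally show ?thesis .
qed

lemma card_separated_eq:
  assumes sg: "subgroup G (BijGroup \<Omega>)" and tr: "transitive_on \<Omega> G"
    and x: "x \<in> \<Omega>" and y: "y \<in> \<Omega>"
  shows "card (separated \<Omega> G f y) = card (separated \<Omega> G f x)"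
proof -
  obtain g where g: "g \<in> G" "g x = y"
    using tr x y by (auto simp: transitive_on_def)
  have "inj_on g (separated \<Omega> G f x)"
    using subgroup_BijGroup_bij_betw[OF sg g(1)]
    by (auto simp: bij_betw_def separated_def intro: inj_on_subset)
  then show ?thesis
    using separated_perm_image[OF sg g(1) x] g(2) by (simp add: card_image)
qed

lemma image_separated_subset:
  assumes sg: "subgroup G (BijGroup \<Omega>)" and f: "f \<in> \<Omega> \<rightarrow> \<Omega>"
    and s: "s \<in> gen_semigroup \<Omega> G f" and x: "x \<in> \<Omega>"
  shows "s ` separated \<Omega> G f x \<subseteq> separated \<Omega> G f (s x)"
proof
  fix w assume "w \<in> s ` separated \<Omega> G f x"
  then obtain z where z: "z \<in> \<Omega>" "\<not> collapsible \<Omega> G f x z" and w: "w = s z"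
    by (auto simp: separated_def)
  have "s z \<in> \<Omega>"
    using gen_semigroup_funcset[OF sg f s] z(1) by blast
  moreover have "\<not> collapsible \<Omega> G f (s x) (s z)"
    using collapsible_image[OF s x z(1)] z(2) by blast
  ultimately show "w \<in> separated \<Omega> G f (s x)"
    using w by (simp add: separated_def)
qed

lemma separated_subset_if_collisions_over:
  assumes fin: "finite \<Omega>" and sg: "subgroup G (BijGroup \<Omega>)" and tr: "transitive_on \<Omega> G"
    and f: "f \<in> \<Omega> \<rightarrow> \<Omega>" and a: "a \<in> \<Omega>" and b: "b \<in> \<Omega>" and ab: "f b = f a"
    and collide: "\<And>x y. x \<in> \<Omega> \<Longrightarrow> y \<in> \<Omega> \<Longrightarrow> x \<noteq> y \<Longrightarrow> f x = f y \<Longrightarrow> f x = f a"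
  shows "separated \<Omega> G f b \<subseteq> separated \<Omega> G f a"
proof -
  let ?U = "separated \<Omega> G f a \<union> separated \<Omega> G f b"
  have f_coll: "collapsible \<Omega> G f z w" if "f z = f w" for z w
    using that gen_semigroup.gen_map by (auto simp: collapsible_def)
  have fin_sep: "finite (separated \<Omega> G f z)" for z
    using fin by (rule finite_subset[rotated]) (auto simp: separated_def)
  have "inj_on f ?U"
  proof (rule inj_onI, rule ccontr)
    fix z w assume z: "z \<in> ?U" and w: "w \<in> ?U" and zw: "f z = f w" "z \<noteq> w"
    have "z \<in> \<Omega>" "w \<in> \<Omega>"
      using z w by (auto simp: separated_def)
    then have "f z = f a"
      using collide zw by blast
    then have "collapsible \<Omega> G f a z" "collapsible \<Omega> G f b z"
      using f_coll ab by metis+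
    with z show False
      by (auto simp: separated_def)
  qed
  then have "card ?U = card (f ` ?U)"
    by (simp add: card_image)
  also have "\<dots> \<le> card (separated \<Omega> G f (f a))"
  proof (rule card_mono[OF fin_sep])
    show "f ` ?U \<subseteq> separated \<Omega> G f (f a)"
      using image_separated_subset[OF sg f gen_semigroup.gen_map a]
        image_separated_subset[OF sg f gen_semigroup.gen_map b] ab
      by (simp add: image_Un)
  qed
  also have "\<dots> = card (separated \<Omega> G f a)"
    using card_separated_eq[OF sg tr a] f a by blast
  finally have "card ?U \<le> card (separated \<Omega> G f a)" .
  moreover have "finite ?U"
    using fin_sep by blast
  ultimately have "separated \<Omega> G f a = ?U"
    by (metis card_subset_eq card_mono Un_upper1 le_antisym)
  then show ?thesis by blast
qed

lemma kernel_type_k1_collisions: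
  assumes "kernel_type_k1 \<Omega> f k"
  obtains a where "a \<in> \<Omega>" and "card {x \<in> \<Omega>. f x = f a} = k"
    and "\<And>x y. x \<in> \<Omega> \<Longrightarrow> y \<in> \<Omega> \<Longrightarrow> x \<noteq> y \<Longrightarrow> f x = f y \<Longrightarrow> f x = f a"
proof -
  obtain B where B: "B \<in> kernel \<Omega> f" "card B = k"
    and others: "\<And>C. C \<in> kernel \<Omega> f \<Longrightarrow> C \<noteq> B \<Longrightarrow> card C = 1"
    using assms by (auto simp: kernel_type_k1_def)
  obtain a where a: "a \<in> \<Omega>" and B_eq: "B = {x \<in> \<Omega>. f x = f a}"
    using B(1) by (auto simp: kernel_def)
  have "f x = f a" if xy: "x \<in> \<Omega>" "y \<in> \<Omega>" "x \<noteq> y" "f x = f y" for x y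
  proof -
    let ?C = "{z \<in> \<Omega>. f z = f x}"
    have "?C \<in> kernel \<Omega> f"
      using xy by (auto simp: kernel_def)
    moreover have "card ?C \<noteq> 1"
      using xy by (metis (mono_tags, lifting) card_1_singletonE mem_Collect_eq singletonD)
    ultimately have "?C = B"
      using others by blast
    then show ?thesis
      using xy(1) B_eq by blast
  qed
  with a B(2) B_eq that show ?thesis by blast
qed

lemma synchronizes_if_all_collapsible:
  assumes fin: "finite \<Omega>" and sg: "subgroup G (BijGroup \<Omega>)" and f: "f \<in> \<Omega> \<rightarrow> \<Omega>"
    and ne: "\<Omega> \<noteq> {}" and all: "\<And>x y. x \<in> \<Omega> \<Longrightarrow> y \<in> \<Omega> \<Longrightarrow> collapsible \<Omega> G f x y"
  shows "synchronizes \<Omega> G f"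
proof -
  let ?M = "gen_semigroup \<Omega> G f"
  obtain h where h: "h \<in> ?M" and min: "\<And>h'. h' \<in> ?M \<Longrightarrow> card (h ` \<Omega>) \<le> card (h' ` \<Omega>)"
    using ex_has_least_nat[of "\<lambda>h. h \<in> ?M" f "\<lambda>h. card (h ` \<Omega>)"] gen_semigroup.gen_map by blast
  have h_img: "h ` \<Omega> \<subseteq> \<Omega>"
    using gen_semigroup_funcset[OF sg f h] by auto
  have "card (h ` \<Omega>) \<le> 1"
  proof (rule ccontr)
    assume "\<not> card (h ` \<Omega>) \<le> 1"
    then obtain u v where uv: "u \<in> h ` \<Omega>" "v \<in> h ` \<Omega>" "u \<noteq> v"
      using fin by (metis One_nat_def card_le_Suc0_iff_eq finite_imageI)
    have "collapsible \<Omega> G f u v"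
      using all h_img uv(1,2) by blast
    then obtain m where m: "m \<in> ?M" "m u = m v"
      by (auto simp: collapsible_def)
    have "\<not> inj_on m (h ` \<Omega>)"
      using uv m(2) by (auto simp: inj_on_def)
    then have "card (m ` h ` \<Omega>) < card (h ` \<Omega>)"
      using fin card_image_le inj_on_iff_eq_card le_neq_implies_less by (metis finite_imageI)
    moreover have "compose \<Omega> m h ` \<Omega> = m ` h ` \<Omega>"
      by (auto simp: compose_def)
    ultimately show False
      using min[OF gen_semigroup.gen_comp[OF h m(1)]] by simp
  qed
  moreover obtain c where "c \<in> h ` \<Omega>"
    using ne by blast
  ultimately have c: "h ` \<Omega> = {c}"
    using card_le_Suc0_iff_eq[OF finite_imageI[OF fin]] by auto
  then show ?thesis
    using h h_img by (auto simp: synchronizes_def)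
qed

lemma non_synchronized_map_imp_imprimitive:
  assumes fin: "finite \<Omega>" and sg: "subgroup G (BijGroup \<Omega>)" and tr: "transitive_on \<Omega> G"
    and k: "k > 1" and f: "f \<in> \<Omega> \<rightarrow> \<Omega>" and kt: "kernel_type_k1 \<Omega> f k"
    and ns: "\<not> synchronizes \<Omega> G f"
  shows "imprimitive_with_block_ge \<Omega> G k"
proof -
  obtain a where a: "a \<in> \<Omega>" and card_fibre: "card {x \<in> \<Omega>. f x = f a} = k"
    and collide: "\<And>x y. x \<in> \<Omega> \<Longrightarrow> y \<in> \<Omega> \<Longrightarrow> x \<noteq> y \<Longrightarrow> f x = f y \<Longrightarrow> f x = f a"
    using kernel_type_k1_collisions[OF kt] by blast
  define r where "r = {(x, y). x \<in> \<Omega> \<and> y \<in> \<Omega> \<and> separated \<Omega> G f x = separated \<Omega> G f y}"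
  have eq: "equiv \<Omega> r"
    by (auto simp: r_def equiv_def refl_on_def sym_def trans_def)
  have compat: "(g x, g y) \<in> r \<longleftrightarrow> (x, y) \<in> r" if "g \<in> G" "x \<in> \<Omega>" "y \<in> \<Omega>" for g x y
  proof -
    have bij: "bij_betw g \<Omega> \<Omega>"
      using subgroup_BijGroup_bij_betw[OF sg that(1)] .
    then have "g x \<in> \<Omega>" "g y \<in> \<Omega>"
      using that(2,3) bij_betwE by blast+
    moreover have "g ` separated \<Omega> G f x = g ` separated \<Omega> G f y
        \<longleftrightarrow> separated \<Omega> G f x = separated \<Omega> G f y"
      using bij by (intro inj_on_image_eq_iff) (auto simp: bij_betw_def separated_def)
    ultimately show ?thesis
      using that separated_perm_image[OF sg that(1)] by (auto simp: r_def)
  qed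
  have "(a, b) \<in> r" if b: "b \<in> \<Omega>" "f b = f a" for b
  proof -
    have "separated \<Omega> G f b \<subseteq> separated \<Omega> G f a"
      using separated_subset_if_collisions_over[OF fin sg tr f a b(1) b(2) collide] .
    moreover have "separated \<Omega> G f a \<subseteq> separated \<Omega> G f b"
      using separated_subset_if_collisions_over[OF fin sg tr f b(1) a b(2)[symmetric]] collide b(2)
      by metis
    ultimately show ?thesis
      using a b(1) by (auto simp: r_def)
  qed
  then have "{x \<in> \<Omega>. f x = f a} \<subseteq> r `` {a}"
    by blast
  moreover have "finite (r `` {a})"
    using fin by (rule finite_subset[rotated]) (auto simp: r_def)
  ultimately have "card (r `` {a}) \<ge> k"
    using card_fibre card_mono by metis
  moreover obtain x y where xy: "x \<in> \<Omega>" "y \<in> \<Omega>" "\<not> collapsible \<Omega> G f x y"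
    using synchronizes_if_all_collapsible[OF fin sg f] ns a by blast
  have "(x, y) \<notin> r"
  proof
    assume "(x, y) \<in> r"
    then have "y \<in> separated \<Omega> G f x \<longleftrightarrow> y \<in> separated \<Omega> G f y"
      by (simp add: r_def)
    with xy collapsible_refl[of \<Omega> G f y] show False
      by (simp add: separated_def)
  qed
  ultimately show ?thesis
    using imprimitive_if_G_congruence[OF sg eq compat a k] xy(1,2) by blast
qed

theorem theorem2:
  fixes \<Omega> :: "'a set" and G :: "('a \<Rightarrow> 'a) set" and k :: nat
  assumes "finite \<Omega>"
    and "subgroup G (BijGroup \<Omega>)"
    and "transitive_on \<Omega> G"
    and "k > 1"
  shows "imprimitive_with_block_ge \<Omega> G k \<longleftrightarrow>
         (\<exists>f \<in> \<Omega> \<rightarrow>\<^sub>E \<Omega>. kernel_type_k1 \<Omega> f k \<and> \<not> synchronizes \<Omega> G f)"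
proof
  assume "imprimitive_with_block_ge \<Omega> G k"
  then show "\<exists>f \<in> \<Omega> \<rightarrow>\<^sub>E \<Omega>. kernel_type_k1 \<Omega> f k \<and> \<not> synchronizes \<Omega> G f"
    using imprimitive_imp_non_synchronized_map assms(2,4) by blast
next
  assume "\<exists>f \<in> \<Omega> \<rightarrow>\<^sub>E \<Omega>. kernel_type_k1 \<Omega> f k \<and> \<not> synchronizes \<Omega> G f"
  then obtain f where "f \<in> \<Omega> \<rightarrow> \<Omega>" "kernel_type_k1 \<Omega> f k" "\<not> synchronizes \<Omega> G f"
    by (auto simp: PiE_def)
  then show "imprimitive_with_block_ge \<Omega> G k"
    using non_synchronized_map_imp_imprimitive assms by blast
qed

end
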